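(* Let $n\in\mathbb{N}$, $\delta\in(0,1]$ and $\varepsilon_0>0$ with $\varepsilon_0\le\log\left(\frac{n}{16\log(2/\delta)}\right)$. Let $C\sim\mathrm{Bin}(n-1,e^{-\varepsilon_0})$, conditionally on $C$ let $A\sim\mathrm{Bin}(C,1/2)$, and let $\Delta\sim\mathrm{Bern}\left(\frac{e^{\varepsilon_0}}{e^{\varepsilon_0}+1}\right)$ be independent of $(C,A)$. Let $P=(A+\Delta,\,C-A+1-\Delta)$ and $Q=(A+1-\Delta,\,C-A+\Delta)$. Then $P$ and $Q$ are $(\varepsilon,\delta)$-indistinguishable for $$\varepsilon=\log\left(1+\frac{e^{\varepsilon_0}-1}{e^{\varepsilon_0}+1}\left(\frac{8\sqrt{e^{\varepsilon_0}\log(4/\delta)}}{\sqrt{n}}+\frac{8e^{\varepsilon_0}}{n}\right)\right).$$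
   Context: Two random variables $P,Q$ on the same space are $(\varepsilon,\delta)$-indistinguishable if for every event $E$, $e^{-\varepsilon}(\Pr(Q\in E)-\delta)\le\Pr(P\in E)\le e^{\varepsilon}\Pr(Q\in E)+\delta$. $\mathrm{Bin}(m,p)$ is the binomial distribution and $\mathrm{Bern}(p)$ the Bernoulli distribution with bias $p$. *)

theory Defs
  imports "HOL-Probability.Probability"
begin

definition indist :: "real \<Rightarrow> real \<Rightarrow> 'a pmf \<Rightarrow> 'a pmf \<Rightarrow> bool" where
  "indist \<epsilon> \<delta> P Q \<longleftrightarrow>
     (\<forall>E. exp (-\<epsilon>) * (measure_pmf.prob Q E - \<delta>) \<le> measure_pmf.prob P E \<and>
          measure_pmf.prob P E \<le> exp \<epsilon> * measure_pmf.prob Q E + \<delta>)"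

definition CAD :: "nat \<Rightarrow> real \<Rightarrow> (nat \<times> nat \<times> bool) pmf" where
  "CAD n \<epsilon>0 =
     do { C \<leftarrow> binomial_pmf (n - 1) (exp (-\<epsilon>0));
          A \<leftarrow> binomial_pmf C (1/2);
          D \<leftarrow> bernoulli_pmf (exp \<epsilon>0 / (exp \<epsilon>0 + 1));
          return_pmf (C, A, D) }"

definition P_dist :: "nat \<Rightarrow> real \<Rightarrow> (nat \<times> nat) pmf" where
  "P_dist n \<epsilon>0 = map_pmf (\<lambda>(C, A, D). (A + of_bool D, C - A + 1 - of_bool D)) (CAD n \<epsilon>0)"

definition Q_dist :: "nat \<Rightarrow> real \<Rightarrow> (nat \<times> nat) pmf" where
  "Q_dist n \<epsilon>0 = map_pmf (\<lambda>(C, A, D). (A + 1 - of_bool D, C - A + of_bool D)) (CAD n \<epsilon>0)"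

end

theory Submission
  imports Defs
begin

text \<open>
  Conditionally on C = c, both P and Q live on the line x + y = c + 1, with first coordinates
  A + Delta and A + 1 - Delta. Since the Bin(c, 1/2) weights satisfy b(x - 1) y = b(x) x at (x, y),
  the likelihood ratio of P to Q at (x, y) is (e x + y) / (x + e y) with e = exp eps0, and this is
  at most 1 + K, K = (e - 1) / (e + 1) T, on the balanced pairs |x - y| (2 + K) <= T (x + y).
  The unbalanced pairs are handled by a Chernoff bound: their indicator is dominated by two
  exponentials in A and C - A, whose expectation comes from the generating functions of
  Bin(C, 1/2) and Bin(n - 1, exp (- eps0)). With the exponent l = T / (2 (2 + (1 + T)^2)) and the
  given T, the resulting bound is delta.
\<close>

lemma measure_bind_pmf:
  "measure_pmf.prob (bind_pmf M f) A = measure_pmf.expectation M (\<lambda>x. measure_pmf.prob (f x) A)"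
proof -
  have "ennreal (measure_pmf.prob (bind_pmf M f) A) = emeasure (bind_pmf M f) A"
    by (simp add: measure_pmf.emeasure_eq_measure)
  also have "\<dots> = \<integral>\<^sup>+x. ennreal (measure_pmf.prob (f x) A) \<partial>M"
    by (subst emeasure_bind_pmf) (simp add: measure_pmf.emeasure_eq_measure)
  also have "\<dots> = ennreal (measure_pmf.expectation M (\<lambda>x. measure_pmf.prob (f x) A))"
    by (intro nn_integral_eq_integral measure_pmf.integrable_const_bound[where B = 1]) auto
  finally show ?thesis by (simp add: integral_nonneg_AE)
qed

lemma measure_pmf_le_of_pmf_le:
  assumes "0 \<le> k" "\<And>z. z \<in> G \<Longrightarrow> pmf P z \<le> k * pmf Q z"
  shows "measure_pmf.prob P E \<le> k * measure_pmf.prob Q E + measure_pmf.prob P (- G)"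
proof -
  have "measure_pmf.prob P (E \<inter> G) = infsetsum (pmf P) (E \<inter> G)"
    by (rule measure_pmf_conv_infsetsum)
  also have "\<dots> \<le> infsetsum (\<lambda>z. k * pmf Q z) (E \<inter> G)"
    using assms(2) by (intro infsetsum_mono) (auto intro: abs_summable_on_cmult_right)
  also have "\<dots> = k * measure_pmf.prob Q (E \<inter> G)"
    by (simp add: infsetsum_cmult_right pmf_abs_summable measure_pmf_conv_infsetsum)
  also have "\<dots> \<le> k * measure_pmf.prob Q E"
    using assms(1) by (intro mult_left_mono measure_pmf.finite_measure_mono) auto
  finally have "measure_pmf.prob P (E \<inter> G) \<le> k * measure_pmf.prob Q E" .
  moreover have "measure_pmf.prob P E = measure_pmf.prob P (E \<inter> G) + measure_pmf.prob P (E - G)"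
    by (simp add: measure_pmf.finite_measure_Diff')
  moreover have "measure_pmf.prob P (E - G) \<le> measure_pmf.prob P (- G)"
    by (intro measure_pmf.finite_measure_mono) auto
  ultimately show ?thesis by linarith
qed

lemma pmf_bind_le:
  assumes "\<And>x. x \<in> set_pmf M \<Longrightarrow> pmf (f x) z \<le> k * pmf (g x) z"
  shows "pmf (bind_pmf M f) z \<le> k * pmf (bind_pmf M g) z"
proof -
  have "integrable M (\<lambda>x. pmf (f x) z)" "integrable M (\<lambda>x. pmf (g x) z)"
    by (auto intro!: measure_pmf.integrable_const_bound[where B = 1] simp: pmf_le_1)
  hence "pmf (bind_pmf M f) z \<le> measure_pmf.expectation M (\<lambda>x. k * pmf (g x) z)"
    unfolding pmf_bind using assms by (intro integral_mono_AE AE_pmfI) auto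
  thus ?thesis by (simp add: pmf_bind)
qed

lemma pmf_map_inj_le:
  assumes "inj f" "0 \<le> k" "\<And>x. f x = z \<Longrightarrow> pmf M x \<le> k * pmf N x"
  shows "pmf (map_pmf f M) z \<le> k * pmf (map_pmf f N) z"
proof (cases "z \<in> range f")
  case True
  then obtain x where "z = f x" by blast
  thus ?thesis using assms by (simp add: pmf_map_inj')
next
  case False
  hence "f -` {z} = {}" by auto
  thus ?thesis using assms(2) by (simp add: pmf_map)
qed

lemma indist_of_pmf_le:
  fixes P Q :: "'a pmf"
  assumes "0 \<le> K"
    and "\<And>z. z \<in> G \<Longrightarrow> pmf P z \<le> (1 + K) * pmf Q z"
    and "\<And>z. z \<in> G \<Longrightarrow> pmf Q z \<le> (1 + K) * pmf P z"
    and "measure_pmf.prob P (- G) \<le> \<delta>" "measure_pmf.prob Q (- G) \<le> \<delta>"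
  shows "indist (ln (1 + K)) \<delta> P Q"
  unfolding indist_def
proof (intro allI conjI)
  fix E
  have K: "0 < 1 + K" using assms(1) by simp
  have "measure_pmf.prob P E \<le> (1 + K) * measure_pmf.prob Q E + measure_pmf.prob P (- G)"
    using K assms(2) by (intro measure_pmf_le_of_pmf_le) auto
  thus "measure_pmf.prob P E \<le> exp (ln (1 + K)) * measure_pmf.prob Q E + \<delta>"
    using K assms(4) by simp
  have "measure_pmf.prob Q E \<le> (1 + K) * measure_pmf.prob P E + measure_pmf.prob Q (- G)"
    using K assms(3) by (intro measure_pmf_le_of_pmf_le) auto
  hence "(measure_pmf.prob Q E - \<delta>) / (1 + K) \<le> measure_pmf.prob P E"
    using K assms(5) by (simp add: divide_le_eq mult.commute)
  thus "exp (- ln (1 + K)) * (measure_pmf.prob Q E - \<delta>) \<le> measure_pmf.prob P E"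
    using K by (simp add: exp_minus inverse_eq_divide)
qed

lemma pmf_binomial_Suc_ratio:
  assumes "0 \<le> p" "p \<le> 1"
  shows "pmf (binomial_pmf c p) k * real (c - k) * p = pmf (binomial_pmf c p) (Suc k) * real (Suc k) * (1 - p)"
proof (cases "k < c")
  case True
  have choose: "real (c - k) * real (c choose k) = real (Suc k) * real (c choose Suc k)"
    by (metis binomial_absorb_comp binomial_absorption of_nat_mult)
  have "(1 - p) ^ (c - k) = (1 - p) ^ (c - Suc k) * (1 - p)"
    using True by (metis Suc_diff_Suc power_Suc2)
  hence "pmf (binomial_pmf c p) k * real (c - k) * p =
      (real (c - k) * real (c choose k)) * p ^ Suc k * (1 - p) ^ (c - Suc k) * (1 - p)"
    using assms by (simp add: mult_ac)
  also have "\<dots> = pmf (binomial_pmf c p) (Suc k) * real (Suc k) * (1 - p)"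
    unfolding choose using assms by (simp add: mult_ac del: of_nat_Suc)
  finally show ?thesis .
next
  case False
  thus ?thesis using assms by simp
qed

lemma expectation_binomial_pmf_power:
  assumes "0 \<le> p" "p \<le> 1"
  shows "measure_pmf.expectation (binomial_pmf n p) (\<lambda>k. z ^ k) = (1 - p + p * z) ^ n"
proof -
  have "(1 - p + p * z) ^ n = (\<Sum>k\<le>n. real (n choose k) * (p * z) ^ k * (1 - p) ^ (n - k))"
    by (subst add.commute) (rule binomial_ring)
  thus ?thesis
    using assms by (simp add: expectation_binomial_pmf' power_mult_distrib mult_ac)
qed

lemma expectation_binomial_half_exp:
  "measure_pmf.expectation (binomial_pmf c (1/2)) (\<lambda>a. exp (s * real a + t * (real c - real a))) =
     ((exp s + exp t) / 2) ^ c"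
proof -
  have "exp (s * real a + t * (real c - real a)) = exp t ^ c * exp (s - t) ^ a" for a
  proof -
    have "s * real a + t * (real c - real a) = real c * t + real a * (s - t)"
      by (simp add: algebra_simps)
    thus ?thesis by (simp only: exp_add exp_of_nat_mult)
  qed
  hence "measure_pmf.expectation (binomial_pmf c (1/2)) (\<lambda>a. exp (s * real a + t * (real c - real a))) =
      exp t ^ c * ((1 + exp (s - t)) / 2) ^ c"
    by (simp add: expectation_binomial_pmf_power add_divide_distrib)
  also have "\<dots> = ((exp t * (1 + exp (s - t))) / 2) ^ c"
    by (metis power_mult_distrib times_divide_eq_right)
  also have "exp t * (1 + exp (s - t)) = exp s + exp t"
    by (simp add: exp_diff distrib_left)
  finally show ?thesis .
qed

lemma expectation_binomial_half_exp_sum: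
  "measure_pmf.expectation (binomial_pmf c (1/2))
     (\<lambda>a. exp (s * real a + t * (real c - real a)) + exp (t * real a + s * (real c - real a))) =
     2 * ((exp s + exp t) / 2) ^ c"
  by (subst Bochner_Integration.integral_add) (auto simp: expectation_binomial_half_exp add.commute)

definition plus_bernoulli_pmf :: "nat pmf \<Rightarrow> real \<Rightarrow> nat pmf" where
  "plus_bernoulli_pmf M p = bernoulli_pmf p \<bind> (\<lambda>d. map_pmf (\<lambda>a. a + of_bool d) M)"

lemma pmf_map_Suc: "pmf (map_pmf Suc M) x = (if x = 0 then 0 else pmf M (x - 1))"
proof (cases x)
  case 0
  thus ?thesis by (simp add: pmf_map vimage_def)
next
  case (Suc j)
  thus ?thesis using pmf_map_inj'[of Suc M j] by simp
qed

lemma pmf_plus_bernoulli_pmf: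
  assumes "0 \<le> p" "p \<le> 1"
  shows "pmf (plus_bernoulli_pmf M p) x = p * (if x = 0 then 0 else pmf M (x - 1)) + (1 - p) * pmf M x"
  using assms by (simp add: plus_bernoulli_pmf_def pmf_bind pmf_map_Suc[symmetric] mult.commute)

lemma measure_plus_bernoulli_pmf:
  assumes "0 \<le> p" "p \<le> 1"
  shows "measure_pmf.prob (plus_bernoulli_pmf M p) A =
    p * measure_pmf.prob M (Suc -` A) + (1 - p) * measure_pmf.prob M A"
  using assms by (simp add: plus_bernoulli_pmf_def measure_bind_pmf measure_map_pmf mult.commute)

lemma measure_plus_bernoulli_pmf_le:
  fixes M :: "nat pmf"
  assumes "0 \<le> p" "p \<le> 1" "integrable M f"
    and "\<And>a. a \<in> set_pmf M \<Longrightarrow> indicator A a \<le> f a \<and> indicator A (Suc a) \<le> f a"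
  shows "measure_pmf.prob (plus_bernoulli_pmf M p) A \<le> measure_pmf.expectation M f"
proof -
  have "measure_pmf.prob M B \<le> measure_pmf.expectation M f"
    if "\<And>a. a \<in> set_pmf M \<Longrightarrow> indicator B a \<le> f a" for B
  proof -
    have "measure_pmf.prob M B = measure_pmf.expectation M (indicator B)" by simp
    also have "\<dots> \<le> measure_pmf.expectation M f"
    proof (rule integral_mono_AE[OF _ assms(3)])
      show "integrable M (indicator B :: nat \<Rightarrow> real)"
        by (intro measure_pmf.integrable_const_bound[where B = 1]) auto
    qed (use that in \<open>auto intro: AE_pmfI\<close>)
    finally show ?thesis .
  qed
  hence "measure_pmf.prob M (Suc -` A) \<le> measure_pmf.expectation M f"
        "measure_pmf.prob M A \<le> measure_pmf.expectation M f"
    using assms(4) by (auto simp: indicator_def)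
  hence "p * measure_pmf.prob M (Suc -` A) + (1 - p) * measure_pmf.prob M A \<le>
      p * measure_pmf.expectation M f + (1 - p) * measure_pmf.expectation M f"
    using assms(1,2) by (intro add_mono mult_left_mono) auto
  thus ?thesis using assms(1,2) by (simp add: measure_plus_bernoulli_pmf algebra_simps)
qed

lemma bernoulli_pmf_Not:
  assumes "0 \<le> p" "p \<le> 1"
  shows "map_pmf Not (bernoulli_pmf p) = bernoulli_pmf (1 - p)"
proof (rule pmf_eqI)
  fix b :: bool
  show "pmf (map_pmf Not (bernoulli_pmf p)) b = pmf (bernoulli_pmf (1 - p)) b"
    using assms pmf_map_inj'[of Not "bernoulli_pmf p" "\<not> b"] by (cases b) (auto simp: inj_def)
qed

lemma map_pmf_CAD:
  "map_pmf h (CAD n e0) = binomial_pmf (n - 1) (exp (- e0)) \<bind> (\<lambda>c.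
     bernoulli_pmf (exp e0 / (exp e0 + 1)) \<bind> (\<lambda>d. map_pmf (\<lambda>a. h (c, a, d)) (binomial_pmf c (1/2))))"
  unfolding CAD_def map_pmf_def bind_assoc_pmf bind_return_pmf
  by (subst bind_commute_pmf) (rule refl)

lemma P_dist_eq:
  "P_dist n e0 = binomial_pmf (n - 1) (exp (- e0)) \<bind> (\<lambda>c. map_pmf (\<lambda>x. (x, Suc c - x))
     (plus_bernoulli_pmf (binomial_pmf c (1/2)) (exp e0 / (exp e0 + 1))))"
  unfolding P_dist_def map_pmf_CAD plus_bernoulli_pmf_def map_bind_pmf map_pmf_comp
  by (intro bind_pmf_cong refl map_pmf_cong) auto

lemma Q_dist_eq:
  "Q_dist n e0 = binomial_pmf (n - 1) (exp (- e0)) \<bind> (\<lambda>c. map_pmf (\<lambda>x. (x, Suc c - x))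
     (plus_bernoulli_pmf (binomial_pmf c (1/2)) (1 / (exp e0 + 1))))"
proof -
  have Not_bernoulli: "bernoulli_pmf (1 / (exp e0 + 1)) = map_pmf Not (bernoulli_pmf (exp e0 / (exp e0 + 1)))"
  proof -
    have pos: "0 < exp e0 + 1" by (simp add: add_pos_pos)
    hence "1 / (exp e0 + 1) = 1 - exp e0 / (exp e0 + 1)" by (simp add: field_simps)
    moreover have "exp e0 / (exp e0 + 1) \<le> 1" using pos by (simp add: divide_le_eq)
    ultimately show ?thesis by (subst bernoulli_pmf_Not) auto
  qed
  show ?thesis
    unfolding Q_dist_def map_pmf_CAD plus_bernoulli_pmf_def Not_bernoulli bind_map_pmf map_bind_pmf map_pmf_comp
    by (intro bind_pmf_cong refl map_pmf_cong) auto
qed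

lemma weighted_ratio_le:
  fixes B0 B1 x y e K T :: real
  assumes "0 \<le> B0" "0 \<le> B1" "B1 * y = B0 * x" "0 \<le> x" "0 \<le> y" "x = 0 \<Longrightarrow> B1 = 0"
    and "1 < e" "0 \<le> K" "K * (e + 1) = (e - 1) * T" "\<bar>x - y\<bar> * (2 + K) \<le> T * (x + y)"
  shows "e * B1 + B0 \<le> (1 + K) * (B1 + e * B0)"
proof (cases "x = 0")
  case True
  have "1 \<le> (1 + K) * e"
    using assms(7,8) mult_mono[of 1 "1 + K" 1 e] by simp
  hence "B0 \<le> (1 + K) * (e * B0)"
    using assms(1) mult_right_mono[of 1 "(1 + K) * e" B0] by (simp add: mult_ac)
  thus ?thesis using True assms(6) by simp
next
  case False
  have "(x - y) * (2 + K) \<le> T * (x + y)"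
    using assms(10) abs_ge_self[of "x - y"] assms(8) by (smt (verit) mult_right_mono)
  hence "0 \<le> (e - 1) * (T * (x + y) - (2 + K) * (x - y))"
    using assms(7) by (intro mult_nonneg_nonneg) (auto simp: mult.commute)
  also have "\<dots> = ((e - 1) * T) * (x + y) - (e - 1) * (2 + K) * (x - y)"
    by (simp add: algebra_simps)
  also have "\<dots> = (K * (e + 1)) * (x + y) - (e - 1) * (2 + K) * (x - y)"
    by (simp only: assms(9))
  also have "\<dots> = 2 * ((1 + K) * (x + e * y) - (e * x + y))"
    by (simp add: algebra_simps)
  finally have "e * x + y \<le> (1 + K) * (x + e * y)" by simp
  hence "B1 * (e * x + y) \<le> B1 * ((1 + K) * (x + e * y))"
    using assms(2) by (rule mult_left_mono)
  moreover have "x * (e * B1 + B0) = B1 * (e * x + y)"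
    using assms(3) by (simp add: algebra_simps)
  ultimately have "x * (e * B1 + B0) \<le> (1 + K) * (B1 * x + e * (B1 * y))"
    by (simp add: algebra_simps)
  also have "\<dots> = x * ((1 + K) * (B1 + e * B0))"
    unfolding assms(3) by (simp add: algebra_simps)
  finally show ?thesis using False assms(4) by (simp add: mult_le_cancel_left)
qed

definition balanced_pairs :: "real \<Rightarrow> real \<Rightarrow> (nat \<times> nat) set" where
  "balanced_pairs K T = {(x, y). \<bar>real x - real y\<bar> * (2 + K) \<le> T * (real x + real y)}"

lemma pmf_plus_bernoulli_binomial_half_le:
  fixes e K T :: real
  assumes "1 < e" "0 \<le> K" "K * (e + 1) = (e - 1) * T" "(x, Suc c - x) \<in> balanced_pairs K T"
  defines "P \<equiv> \<lambda>p. plus_bernoulli_pmf (binomial_pmf c (1/2)) p"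
  shows "pmf (P (e / (e + 1))) x \<le> (1 + K) * pmf (P (1 / (e + 1))) x"
    and "pmf (P (1 / (e + 1))) x \<le> (1 + K) * pmf (P (e / (e + 1))) x"
proof -
  define B0 where "B0 = pmf (binomial_pmf c (1/2)) x"
  define B1 where "B1 = (if x = 0 then 0 else pmf (binomial_pmf c (1/2)) (x - 1))"
  define y where "y = Suc c - x"
  have e1: "0 < e + 1" using assms(1) by simp
  have B0: "0 \<le> B0" and B1: "0 \<le> B1" unfolding B0_def B1_def by auto
  have rel: "B1 * real y = B0 * real x"
  proof (cases x)
    case (Suc j)
    have "pmf (binomial_pmf c (1/2)) j * real (c - j) = pmf (binomial_pmf c (1/2)) (Suc j) * real (Suc j)"
      using pmf_binomial_Suc_ratio[of "1/2" c j] by (simp del: pmf_binomial)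
    thus ?thesis unfolding B0_def B1_def y_def Suc by (simp del: pmf_binomial)
  qed (simp add: B1_def)
  have "y = 0 \<Longrightarrow> B0 = 0" unfolding B0_def y_def by simp
  have balanced: "\<bar>real x - real y\<bar> * (2 + K) \<le> T * (real x + real y)"
    using assms(4) unfolding balanced_pairs_def y_def by simp
  have pmf_P_eq: "pmf (P p) x = p * B1 + (1 - p) * B0" if "0 \<le> p" "p \<le> 1" for p
    unfolding P_def B0_def B1_def using that by (rule pmf_plus_bernoulli_pmf)
  have weights: "0 \<le> e / (e + 1)" "e / (e + 1) \<le> 1" "0 \<le> 1 / (e + 1)" "1 / (e + 1) \<le> 1"
      "1 - e / (e + 1) = 1 / (e + 1)" "1 - 1 / (e + 1) = e / (e + 1)"
    using e1 assms(1) by (simp_all add: field_simps)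
  have pmf_P: "pmf (P (e / (e + 1))) x = (e * B1 + B0) / (e + 1)"
              "pmf (P (1 / (e + 1))) x = (B1 + e * B0) / (e + 1)"
    unfolding pmf_P_eq[OF weights(1,2)] pmf_P_eq[OF weights(3,4)] weights(5,6)
    by (simp_all add: add_divide_distrib)
  have "e * B1 + B0 \<le> (1 + K) * (B1 + e * B0)"
    by (rule weighted_ratio_le[OF B0 B1 rel _ _ _ assms(1-3) balanced]) (auto simp: B1_def)
  thus "pmf (P (e / (e + 1))) x \<le> (1 + K) * pmf (P (1 / (e + 1))) x"
    unfolding pmf_P using e1 by (simp add: divide_right_mono)
  have "e * B0 + B1 \<le> (1 + K) * (B0 + e * B1)"
    by (rule weighted_ratio_le[OF B1 B0 rel[symmetric] _ _ _ assms(1-3)])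
       (use balanced \<open>y = 0 \<Longrightarrow> B0 = 0\<close> in \<open>auto simp: abs_minus_commute add.commute\<close>)
  thus "pmf (P (1 / (e + 1))) x \<le> (1 + K) * pmf (P (e / (e + 1))) x"
    unfolding pmf_P using e1 by (simp add: divide_right_mono add.commute)
qed

lemma pmf_P_dist_le_Q_dist:
  assumes "0 < e0" "0 \<le> K" "K * (exp e0 + 1) = (exp e0 - 1) * T" "z \<in> balanced_pairs K T"
  shows "pmf (P_dist n e0) z \<le> (1 + K) * pmf (Q_dist n e0) z"
    and "pmf (Q_dist n e0) z \<le> (1 + K) * pmf (P_dist n e0) z"
proof -
  have inj: "inj (\<lambda>x. (x, Suc c - x))" for c by (rule injI) simp
  have "1 < exp e0" using assms(1) by simp
  note le = pmf_plus_bernoulli_binomial_half_le[OF this assms(2,3)]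
  show "pmf (P_dist n e0) z \<le> (1 + K) * pmf (Q_dist n e0) z"
    unfolding P_dist_eq Q_dist_eq using assms(2,4)
    by (intro pmf_bind_le pmf_map_inj_le[OF inj]) (auto intro: le(1))
  show "pmf (Q_dist n e0) z \<le> (1 + K) * pmf (P_dist n e0) z"
    unfolding P_dist_eq Q_dist_eq using assms(2,4)
    by (intro pmf_bind_le pmf_map_inj_le[OF inj]) (auto intro: le(2))
qed

lemma unbalanced_le_exp:
  fixes K T l :: real
  assumes "0 < l" "0 \<le> K" "a \<le> c" "x \<in> {a, Suc a}" "(x, Suc c - x) \<notin> balanced_pairs K T"
  defines "s \<equiv> l * (2 + K - T)" and "t \<equiv> l * (2 + K + T)"
  shows "1 \<le> exp s * (exp (s * real a + (- t) * (real c - real a)) + exp ((- t) * real a + s * (real c - real a)))"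
proof -
  define y where "y = Suc c - x"
  have sum: "real x + real y = real a + (real c - real a) + 1"
    using assms(3,4) unfolding y_def by auto
  have diff: "\<bar>real x - real y\<bar> \<le> \<bar>real a - (real c - real a)\<bar> + 1"
    using assms(3,4) unfolding y_def by auto
  have "T * (real x + real y) < \<bar>real x - real y\<bar> * (2 + K)"
    using assms(5) unfolding balanced_pairs_def y_def by auto
  also have "\<dots> \<le> (\<bar>real a - (real c - real a)\<bar> + 1) * (2 + K)"
    using diff assms(2) by (intro mult_right_mono) auto
  finally have "T * (real a + (real c - real a) + 1) < (\<bar>real a - (real c - real a)\<bar> + 1) * (2 + K)"
    unfolding sum .
  hence "0 < (2 + K - T) * (real a + 1) - (2 + K + T) * (real c - real a) \<or>
         0 < (2 + K - T) * (real c - real a + 1) - (2 + K + T) * real a"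
    by (cases "real c - real a \<le> real a") (auto simp: algebra_simps)
  moreover have "s + (s * real a + (- t) * (real c - real a)) =
      l * ((2 + K - T) * (real a + 1) - (2 + K + T) * (real c - real a))"
    "s + ((- t) * real a + s * (real c - real a)) =
      l * ((2 + K - T) * (real c - real a + 1) - (2 + K + T) * real a)"
    unfolding s_def t_def by (simp_all add: algebra_simps)
  ultimately have "0 < s + (s * real a + (- t) * (real c - real a)) \<or>
      0 < s + ((- t) * real a + s * (real c - real a))"
    using assms(1) by (auto simp: mult_pos_pos)
  hence "1 \<le> exp s * exp (s * real a + (- t) * (real c - real a)) \<or> 1 \<le> exp s * exp ((- t) * real a + s * (real c - real a))"
    by (auto simp: exp_add[symmetric])
  thus ?thesis by (auto simp: distrib_left add_increasing add_increasing2)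
qed

lemma measure_unbalanced_le:
  fixes K T l p q :: real
  assumes "0 \<le> p" "p \<le> 1" "0 \<le> q" "q \<le> 1" "0 < l" "0 \<le> K"
  defines "s \<equiv> l * (2 + K - T)" and "t \<equiv> l * (2 + K + T)"
  shows "measure_pmf.prob (binomial_pmf N q \<bind> (\<lambda>c. map_pmf (\<lambda>x. (x, Suc c - x))
            (plus_bernoulli_pmf (binomial_pmf c (1/2)) p))) (- balanced_pairs K T)
         \<le> 2 * exp s * (1 - q + q * ((exp s + exp (- t)) / 2)) ^ N"
proof -
  define m where "m = (exp s + exp (- t)) / 2"
  define X where "X c a = exp s * (exp (s * real a + (- t) * (real c - real a)) +
      exp ((- t) * real a + s * (real c - real a)))" for c a :: nat
  have "measure_pmf.prob (map_pmf (\<lambda>x. (x, Suc c - x)) (plus_bernoulli_pmf (binomial_pmf c (1/2)) p))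
      (- balanced_pairs K T) \<le> measure_pmf.expectation (binomial_pmf c (1/2)) (X c)" for c
    unfolding measure_map_pmf
  proof (rule measure_plus_bernoulli_pmf_le[OF assms(1,2)])
    show "integrable (binomial_pmf c (1/2)) (X c)" by simp
    fix a assume "a \<in> set_pmf (binomial_pmf c (1/2))"
    hence "a \<le> c" by simp
    have "0 \<le> X c a" unfolding X_def by simp
    moreover have unbalanced: "1 \<le> X c a"
      if "x \<in> {a, Suc a}" "(x, Suc c - x) \<notin> balanced_pairs K T" for x
      unfolding X_def s_def t_def using unbalanced_le_exp[OF assms(5,6) \<open>a \<le> c\<close> that] .
    moreover have "(Suc a, c - a) \<notin> balanced_pairs K T \<Longrightarrow> 1 \<le> X c a"
      using unbalanced[of "Suc a"] by simp
    ultimately show "indicator ((\<lambda>x. (x, Suc c - x)) -` (- balanced_pairs K T)) a \<le> X c a \<and>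
        indicator ((\<lambda>x. (x, Suc c - x)) -` (- balanced_pairs K T)) (Suc a) \<le> X c a"
      by (auto simp: indicator_def)
  qed
  also have "measure_pmf.expectation (binomial_pmf c (1/2)) (X c) = 2 * exp s * m ^ c" for c
    unfolding X_def m_def integral_mult_right_zero expectation_binomial_half_exp_sum by simp
  finally have "measure_pmf.prob (binomial_pmf N q \<bind> (\<lambda>c. map_pmf (\<lambda>x. (x, Suc c - x))
            (plus_bernoulli_pmf (binomial_pmf c (1/2)) p))) (- balanced_pairs K T)
      \<le> measure_pmf.expectation (binomial_pmf N q) (\<lambda>c. 2 * exp s * m ^ c)"
    unfolding measure_bind_pmf using assms(3,4) by (intro integral_mono) auto
  also have "\<dots> = 2 * exp s * (1 - q + q * m) ^ N"
    using assms(3,4) by (simp add: expectation_binomial_pmf_power)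
  finally show ?thesis unfolding m_def .
qed

lemma exp_le_quadratic_nonpos:
  fixes x :: real
  assumes "x \<le> 0"
  shows "exp x \<le> 1 + x + x\<^sup>2 / 2"
proof -
  obtain t where t: "exp x = (\<Sum>m<3. x ^ m / fact m) + exp t / fact 3 * x ^ 3"
    using Maclaurin_exp_le[of x 3] by blast
  have "x ^ 3 \<le> 0"
    using assms by (simp add: power3_eq_cube mult_nonneg_nonpos zero_le_mult_iff)
  hence "exp t / fact 3 * x ^ 3 \<le> 0" by (intro mult_nonneg_nonpos) auto
  moreover have "(\<Sum>m<3. x ^ m / fact m) = 1 + x + x\<^sup>2 / 2"
    by (simp add: eval_nat_numeral fact_numeral)
  ultimately show ?thesis using t by simp
qed

lemma exp_le_quadratic:
  fixes x :: real
  assumes "x \<le> 1"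
  shows "exp x \<le> 1 + x + x\<^sup>2"
proof (cases "0 \<le> x")
  case True
  thus ?thesis using exp_bound assms by blast
next
  case False
  hence "exp x \<le> 1 + x + x\<^sup>2 / 2" by (intro exp_le_quadratic_nonpos) simp
  also have "\<dots> \<le> 1 + x + x\<^sup>2" by simp
  finally show ?thesis .
qed

lemma exp_mean_le:
  fixes l K T :: real
  assumes "0 < l" "2 * l \<le> 1" "0 \<le> K" "K \<le> T" "T \<le> 4"
  shows "(exp (l * (2 + K - T)) + exp (- (l * (2 + K + T)))) / 2 - 1 \<le> - l * T + l\<^sup>2 * (2 + (1 + T)\<^sup>2)"
proof -
  define al where "al = 2 + K - T"
  define be where "be = 2 + K + T"
  have "al - be = - 2 * T" unfolding al_def be_def by simp
  have "al \<le> 2" unfolding al_def using assms by simp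
  hence "l * al \<le> l * 2" using assms(1) by (intro mult_left_mono) auto
  hence "l * al \<le> 1" using assms(2) by simp
  hence e1: "exp (l * al) \<le> 1 + l * al + (l * al)\<^sup>2" by (rule exp_le_quadratic)
  have e2: "exp (- (l * be)) \<le> 1 + (- (l * be)) + (- (l * be))\<^sup>2 / 2"
    using assms unfolding be_def by (intro exp_le_quadratic_nonpos) simp
  have "\<bar>al\<bar> \<le> 2" using assms unfolding al_def by simp
  hence al2: "al\<^sup>2 \<le> 4" using power_mono[of "\<bar>al\<bar>" 2 2] by simp
  have be2: "be\<^sup>2 \<le> (2 + 2 * T)\<^sup>2" using assms unfolding be_def by (intro power_mono) auto
  have "(exp (l * al) + exp (- (l * be))) / 2 - 1 \<le> (l * (al - be) + l\<^sup>2 * (al\<^sup>2 + be\<^sup>2 / 2)) / 2"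
    using e1 e2 by (simp add: power_mult_distrib field_simps)
  also have "\<dots> = - l * T + l\<^sup>2 * (al\<^sup>2 + be\<^sup>2 / 2) / 2"
    using \<open>al - be = - 2 * T\<close> by (simp add: add_divide_distrib)
  also have "\<dots> \<le> - l * T + l\<^sup>2 * (4 + (2 + 2 * T)\<^sup>2 / 2) / 2"
    using al2 be2 by (intro add_left_mono divide_right_mono mult_left_mono add_mono) auto
  also have "\<dots> = - l * T + l\<^sup>2 * (2 + (1 + T)\<^sup>2)"
    by (simp add: power2_eq_square field_simps)
  finally show ?thesis unfolding al_def be_def .
qed

lemma chernoff_binomial_le:
  fixes K T q :: real
  assumes "0 < T" "T \<le> 4" "0 \<le> K" "K \<le> T" "0 \<le> q" "q \<le> 1"
  defines "W \<equiv> 2 + (1 + T)\<^sup>2"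
  defines "l \<equiv> T / (2 * W)"
  shows "2 * exp (l * (2 + K - T)) * (1 - q + q * ((exp (l * (2 + K - T)) + exp (- (l * (2 + K + T)))) / 2)) ^ N
         \<le> 2 * exp (T / W - real N * q * T\<^sup>2 / (4 * W))"
proof -
  define m where "m = (exp (l * (2 + K - T)) + exp (- (l * (2 + K + T)))) / 2"
  have W: "0 < W" "T \<le> W"
    unfolding W_def using assms(1) by (simp_all add: add_pos_nonneg power2_eq_square algebra_simps)
  have l: "0 < l" "2 * l = T / W" unfolding l_def using assms(1) W by auto
  have "2 * l \<le> 1" using l W by simp
  hence "m - 1 \<le> - l * T + l\<^sup>2 * W"
    unfolding m_def W_def using exp_mean_le[OF l(1) _ assms(3,4,2)] by blast
  also have "\<dots> = - T\<^sup>2 / (4 * W)"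
    unfolding l_def using W by (simp add: field_simps power2_eq_square)
  finally have m: "m - 1 \<le> - T\<^sup>2 / (4 * W)" .
  have base: "0 \<le> 1 - q + q * m" using assms(5,6) by (simp add: m_def add_nonneg_nonneg)
  moreover have "1 - q + q * m \<le> exp (q * (m - 1))"
    using exp_ge_add_one_self[of "q * (m - 1)"] by (simp add: algebra_simps)
  ultimately have "(1 - q + q * m) ^ N \<le> exp (q * (m - 1)) ^ N" by (intro power_mono)
  also have "\<dots> = exp (real N * q * (m - 1))" by (simp add: exp_of_nat_mult[symmetric] mult.assoc)
  also have "\<dots> \<le> exp (- (real N * q * T\<^sup>2 / (4 * W)))"
    using m assms(5) mult_left_mono[OF m, of "real N * q"] by simp
  finally have "(1 - q + q * m) ^ N \<le> exp (- (real N * q * T\<^sup>2 / (4 * W)))" .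
  moreover have "exp (l * (2 + K - T)) \<le> exp (T / W)"
  proof -
    have "l * (2 + K - T) \<le> l * 2" using l assms(4) by (intro mult_left_mono) auto
    also have "\<dots> = T / W" using l(2) by simp
    finally show ?thesis by simp
  qed
  ultimately have "2 * exp (l * (2 + K - T)) * (1 - q + q * m) ^ N \<le> 2 * exp (T / W) * exp (- (real N * q * T\<^sup>2 / (4 * W)))"
    using base by (intro mult_mono) auto
  also have "\<dots> = 2 * exp (T / W + - (real N * q * T\<^sup>2 / (4 * W)))"
    by (simp only: exp_add mult.assoc)
  finally show ?thesis unfolding m_def by simp
qed

lemma mult_le_add_of_mult_sq_le:
  fixes a b u :: real
  assumes "0 \<le> a" "0 \<le> b" "a * u\<^sup>2 \<le> 4 * b"
  shows "a * u \<le> a + b"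
proof (rule power2_le_imp_le)
  have "(a * u)\<^sup>2 = a * (a * u\<^sup>2)" by (simp add: power2_eq_square)
  also have "\<dots> \<le> a * (4 * b)" using assms(1,3) by (intro mult_left_mono)
  also have "\<dots> \<le> (a + b)\<^sup>2"
    using zero_le_square[of "a - b"] by (simp add: power2_eq_square algebra_simps)
  finally show "(a * u)\<^sup>2 \<le> (a + b)\<^sup>2" .
qed (use assms in simp)

lemma deviation_parameter_le:
  fixes u v r L2 L4 \<rho> :: real
  assumes "0 < r" "0 \<le> u" "u\<^sup>2 = 64 * r * L4" "v = 8 * r" "16 * r * L2 \<le> 1" "2/3 \<le> L2"
    and "L2 \<le> L4" "L4 \<le> 2 * L2" "10/11 \<le> \<rho>"
  shows "4 * (u + v) + 4 * (2 + (1 + u + v)\<^sup>2) * L2 \<le> \<rho> * (64 * L4 + 16 * u + 8 * v)"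
proof -
  have Lv: "L2 * v \<le> 1/2" using assms(4,5) by (simp add: mult_ac)
  have Lu2: "L2 * u\<^sup>2 \<le> 4 * L4"
  proof -
    have "L2 * u\<^sup>2 = 4 * L4 * (16 * r * L2)" using assms(3) by (simp add: algebra_simps)
    also have "\<dots> \<le> 4 * L4 * 1" using assms by (intro mult_left_mono) auto
    finally show ?thesis by simp
  qed
  have Lu: "L2 * u \<le> L2 + L4"
    using assms(6,7) Lu2 by (intro mult_le_add_of_mult_sq_le) auto
  have "0 \<le> v" using assms(1,4) by simp
  have Lvu: "(L2 * v) * u \<le> u / 2" using Lv assms(2) mult_right_mono[of "L2 * v" "1/2" u] by simp
  have Lvv: "(L2 * v) * v \<le> v / 2" using Lv \<open>0 \<le> v\<close> mult_right_mono[of "L2 * v" "1/2" v] by simp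
  have "4 * (u + v) + 4 * (2 + (1 + u + v)\<^sup>2) * L2 =
      4 * u + 4 * v + 12 * L2 + 8 * (L2 * u) + 8 * (L2 * v) + 4 * (L2 * u\<^sup>2) +
      8 * ((L2 * v) * u) + 4 * ((L2 * v) * v)"
    by (simp add: power2_eq_square algebra_simps)
  also have "\<dots> \<le> 8 * u + 6 * v + 20 * L2 + 24 * L4 + 4"
    using Lv Lu2 Lu Lvu Lvv by linarith
  also have "\<dots> \<le> 10/11 * (64 * L4 + 16 * u + 8 * v)"
    using assms(2,6,7) \<open>0 \<le> v\<close> by simp
  also have "\<dots> \<le> \<rho> * (64 * L4 + 16 * u + 8 * v)"
    using assms \<open>0 \<le> v\<close> by (intro mult_right_mono) auto
  finally show ?thesis .
qed

lemma deviation_parameter_le_four: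
  fixes u r L2 L4 :: real
  assumes "0 < r" "16 * r * L2 \<le> 1" "0 \<le> u" "u\<^sup>2 = 64 * r * L4" "2/3 \<le> L2" "L2 \<le> L4" "L4 \<le> 2 * L2"
  shows "u + 8 * r \<le> 4"
proof -
  have "L2 * u\<^sup>2 = 4 * L4 * (16 * r * L2)" using assms(4) by (simp add: algebra_simps)
  also have "\<dots> \<le> 4 * L4 * 1" using assms by (intro mult_left_mono) auto
  also have "\<dots> \<le> L2 * 8" using assms(7) by simp
  finally have "u\<^sup>2 \<le> 3\<^sup>2" using assms(5) by simp
  hence "u \<le> 3" by (rule power2_le_imp_le) simp
  moreover have "16 * r * (2/3) \<le> 16 * r * L2" using assms(1,5) by (intro mult_left_mono) auto
  ultimately show ?thesis using assms(2) by linarith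
qed

lemma deviation_threshold_le:
  fixes n :: nat and \<delta> e0 :: real
  assumes "0 < \<delta>" "\<delta> \<le> 1" "0 < e0"
    and "real n > 16 * ln (2 / \<delta>)"
    and "e0 \<le> ln (real n / (16 * ln (2 / \<delta>)))"
  defines "T \<equiv> 8 * sqrt (exp e0 * ln (4 / \<delta>)) / sqrt (real n) + 8 * exp e0 / real n"
  defines "W \<equiv> 2 + (1 + T)\<^sup>2"
  shows "0 < T" "T \<le> 4" "T / W - real (n - 1) * exp (- e0) * T\<^sup>2 / (4 * W) \<le> - ln (2 / \<delta>)"
proof -
  define e where "e = exp e0"
  define L2 where "L2 = ln (2 / \<delta>)"
  define L4 where "L4 = ln (4 / \<delta>)"
  define r where "r = e / real n"
  define u where "u = 8 * sqrt (e * L4) / sqrt (real n)"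
  define v where "v = 8 * r"
  have e: "1 < e" unfolding e_def using assms(3) by simp
  have "ln 2 \<le> L2" unfolding L2_def using assms(1,2) by (subst ln_le_cancel_iff) (auto simp: field_simps)
  hence L2: "2/3 \<le> L2" using ln2_ge_two_thirds by linarith
  have "L4 = ln 2 + L2" unfolding L4_def L2_def using assms(1) ln_mult[of 2 "2 / \<delta>"] by simp
  hence L4: "L2 \<le> L4" "L4 \<le> 2 * L2" using \<open>ln 2 \<le> L2\<close> by auto
  have "10 < real n" using assms(4) L2 unfolding L2_def by linarith
  hence n: "11 \<le> real n" by simp
  have "e \<le> exp (ln (real n / (16 * L2)))" unfolding e_def L2_def using assms(5) by simp
  also have "\<dots> = real n / (16 * L2)" using n L2 by simp
  finally have r: "0 < r" "16 * r * L2 \<le> 1"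
    unfolding r_def using e n L2 by (auto simp: field_simps)
  have u: "0 \<le> u" "u\<^sup>2 = 64 * r * L4"
    unfolding u_def r_def using e n L2 L4 by (auto simp: power_divide power_mult_distrib)
  have T: "T = u + v" unfolding T_def u_def v_def r_def e_def L4_def by simp
  show "0 < T" using T u r unfolding v_def by simp
  show "T \<le> 4" unfolding T v_def by (rule deviation_parameter_le_four[OF r u L2 L4])
  have W: "0 < W" unfolding W_def by (simp add: add_pos_nonneg)
  have "4 * (u + v) + 4 * (2 + (1 + u + v)\<^sup>2) * L2 \<le> (real n - 1) / real n * (64 * L4 + 16 * u + 8 * v)"
    by (rule deviation_parameter_le[OF r(1) u _ r(2) L2 L4]) (use n in \<open>simp_all add: v_def field_simps\<close>)
  hence "4 * T + 4 * W * L2 \<le> (real n - 1) / real n * (64 * L4 + 16 * u + 8 * v)"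
    unfolding T W_def by (simp add: add.assoc)
  also have "\<dots> = real (n - 1) * exp (- e0) * T\<^sup>2"
    unfolding T power2_sum u(2) using e n
    by (simp add: v_def r_def e_def exp_minus field_simps power2_eq_square of_nat_diff)
  finally have "4 * T + 4 * W * L2 \<le> real (n - 1) * exp (- e0) * T\<^sup>2" .
  hence "(4 * T - real (n - 1) * exp (- e0) * T\<^sup>2) / (4 * W) \<le> - L2"
    using W by (simp add: divide_le_eq mult_ac)
  thus "T / W - real (n - 1) * exp (- e0) * T\<^sup>2 / (4 * W) \<le> - ln (2 / \<delta>)"
    unfolding L2_def using W by (simp add: diff_divide_distrib)
qed

lemma measure_unbalanced_le_delta:
  fixes n :: nat and \<delta> e0 K :: real
  assumes "0 < \<delta>" "\<delta> \<le> 1" "0 < e0"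
    and "real n > 16 * ln (2 / \<delta>)"
    and "e0 \<le> ln (real n / (16 * ln (2 / \<delta>)))"
  defines "T \<equiv> 8 * sqrt (exp e0 * ln (4 / \<delta>)) / sqrt (real n) + 8 * exp e0 / real n"
  assumes "0 \<le> K" "K \<le> T"
  shows "measure_pmf.prob (P_dist n e0) (- balanced_pairs K T) \<le> \<delta>"
    and "measure_pmf.prob (Q_dist n e0) (- balanced_pairs K T) \<le> \<delta>"
proof -
  define W where "W = 2 + (1 + T)\<^sup>2"
  define l where "l = T / (2 * W)"
  note T = deviation_threshold_le[OF assms(1-5), folded T_def, folded W_def]
  have q: "0 \<le> exp (- e0)" "exp (- e0) \<le> 1" using assms(3) by auto
  have "0 < l" unfolding l_def W_def using T(1) by (simp add: add_pos_nonneg)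
  have "measure_pmf.prob (binomial_pmf (n - 1) (exp (- e0)) \<bind> (\<lambda>c. map_pmf (\<lambda>x. (x, Suc c - x))
            (plus_bernoulli_pmf (binomial_pmf c (1/2)) p))) (- balanced_pairs K T) \<le> \<delta>"
    if "0 \<le> p" "p \<le> 1" for p
  proof -
    have "measure_pmf.prob (binomial_pmf (n - 1) (exp (- e0)) \<bind> (\<lambda>c. map_pmf (\<lambda>x. (x, Suc c - x))
              (plus_bernoulli_pmf (binomial_pmf c (1/2)) p))) (- balanced_pairs K T)
        \<le> 2 * exp (l * (2 + K - T)) * (1 - exp (- e0) +
              exp (- e0) * ((exp (l * (2 + K - T)) + exp (- (l * (2 + K + T)))) / 2)) ^ (n - 1)"
      by (rule measure_unbalanced_le[OF that q \<open>0 < l\<close> assms(7)])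
    also have "\<dots> \<le> 2 * exp (T / W - real (n - 1) * exp (- e0) * T\<^sup>2 / (4 * W))"
      unfolding l_def W_def by (rule chernoff_binomial_le[OF T(1,2) assms(7,8) q])
    also have "\<dots> \<le> 2 * exp (- ln (2 / \<delta>))" using T(3) by simp
    also have "\<dots> = \<delta>" using assms(1) by (simp add: exp_minus)
    finally show ?thesis .
  qed
  moreover have "0 \<le> exp e0 / (exp e0 + 1)" "exp e0 / (exp e0 + 1) \<le> 1"
    "0 \<le> 1 / (exp e0 + 1)" "1 / (exp e0 + 1) \<le> 1"
    by (auto simp: divide_le_eq add_pos_pos)
  ultimately show "measure_pmf.prob (P_dist n e0) (- balanced_pairs K T) \<le> \<delta>"
    and "measure_pmf.prob (Q_dist n e0) (- balanced_pairs K T) \<le> \<delta>"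
    unfolding P_dist_eq Q_dist_eq by blast+
qed

theorem lemma3p5:
  fixes n :: nat and \<delta> \<epsilon>0 :: real
  assumes "0 < \<delta>" "\<delta> \<le> 1" "0 < \<epsilon>0"
    and "real n > 16 * ln (2 / \<delta>)"
    and "\<epsilon>0 \<le> ln (real n / (16 * ln (2 / \<delta>)))"
  shows "indist
     (ln (1 + (exp \<epsilon>0 - 1) / (exp \<epsilon>0 + 1) *
        (8 * sqrt (exp \<epsilon>0 * ln (4 / \<delta>)) / sqrt (real n) + 8 * exp \<epsilon>0 / real n)))
     \<delta> (P_dist n \<epsilon>0) (Q_dist n \<epsilon>0)"
proof -
  define T where "T = 8 * sqrt (exp \<epsilon>0 * ln (4 / \<delta>)) / sqrt (real n) + 8 * exp \<epsilon>0 / real n"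
  define K where "K = (exp \<epsilon>0 - 1) / (exp \<epsilon>0 + 1) * T"
  have "0 < T" using deviation_threshold_le(1)[OF assms] unfolding T_def .
  have ratio: "0 \<le> (exp \<epsilon>0 - 1) / (exp \<epsilon>0 + 1)" "(exp \<epsilon>0 - 1) / (exp \<epsilon>0 + 1) \<le> 1"
    using assms(3) by (auto simp: divide_le_eq add_pos_pos)
  have K0: "0 \<le> K" unfolding K_def by (rule mult_nonneg_nonneg[OF ratio(1)]) (use \<open>0 < T\<close> in simp)
  have KT: "K \<le> T" unfolding K_def using mult_right_mono[OF ratio(2), of T] \<open>0 < T\<close> by simp
  have "0 < exp \<epsilon>0 + 1" by (simp add: add_pos_pos)
  hence K: "K * (exp \<epsilon>0 + 1) = (exp \<epsilon>0 - 1) * T" unfolding K_def by simp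
  show ?thesis
    unfolding T_def[symmetric] K_def[symmetric]
    using pmf_P_dist_le_Q_dist[OF assms(3) K0 K]
      measure_unbalanced_le_delta[OF assms, folded T_def, OF K0 KT]
    by (intro indist_of_pmf_le[OF K0]) auto
qed

end
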